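(* Let $\mathcal H$ be a Hilbert space, $A$ a bounded, everywhere defined, symmetric operator on $\mathcal H$, and $P$ a self-adjoint operator on $\mathcal H$ such that $PA$ is densely defined. Suppose that the range $R(A)$ is closed, that $N(A)\subset D(P)$, and that $PN(A)\subset N(A)$. Then $AP=(PA)^*$ (and hence $APA$ is self-adjoint).
   Context: $D(X)$, $N(X)$, $R(X)$ denote domain, kernel and range of an operator $X$. $D(PA)=\{x\in\mathcal H: Ax\in D(P)\}$, $D(AP)=D(P)$. *)

theory Defs
  imports "HOL-Analysis.Analysis"
begin

text \<open>The distribution has no complex inner product spaces, so we introduce them:
  a real normed vector space with a compatible complex scalar multiplication and a
  complex inner product (linear in the second, conjugate-linear in the first argument)
  inducing the norm.\<close>

class complex_inner = real_normed_vector +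
  fixes scaleC :: "complex \<Rightarrow> 'a \<Rightarrow> 'a"
    and cinner :: "'a \<Rightarrow> 'a \<Rightarrow> complex"
  assumes scaleC_add_right: "scaleC a (x + y) = scaleC a x + scaleC a y"
    and scaleC_add_left: "scaleC (a + b) x = scaleC a x + scaleC b x"
    and scaleC_scaleC: "scaleC a (scaleC b x) = scaleC (a * b) x"
    and scaleC_one: "scaleC 1 x = x"
    and scaleC_of_real: "scaleC (complex_of_real r) x = scaleR r x"
    and cinner_commute: "cinner x y = cnj (cinner y x)"
    and cinner_add_left: "cinner (x + y) z = cinner x z + cinner y z"
    and cinner_scaleC_left: "cinner (scaleC a x) y = cnj a * cinner x y"
    and cinner_ge_zero: "Im (cinner x x) = 0 \<and> 0 \<le> Re (cinner x x)"
    and cinner_eq_zero: "cinner x x = 0 \<longleftrightarrow> x = 0"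
    and norm_eq_sqrt_cinner: "norm x = sqrt (Re (cinner x x))"

class chilbert_space = complex_inner + complete_space

text \<open>An operator is a pair (domain, map); the map is only meaningful on the domain.\<close>
type_synonym 'a linop = "'a set \<times> ('a \<Rightarrow> 'a)"

definition dom :: "'a linop \<Rightarrow> 'a set" where "dom T = fst T"
definition app :: "'a linop \<Rightarrow> 'a \<Rightarrow> 'a" where "app T = snd T"

definition csubspace :: "'a::complex_inner set \<Rightarrow> bool" where
  "csubspace D \<longleftrightarrow> 0 \<in> D \<and> (\<forall>x\<in>D. \<forall>y\<in>D. x + y \<in> D) \<and> (\<forall>c x. x \<in> D \<longrightarrow> scaleC c x \<in> D)"

definition is_linop :: "'a::complex_inner linop \<Rightarrow> bool" where
  "is_linop T \<longleftrightarrow> csubspace (dom T) \<and>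
     (\<forall>x\<in>dom T. \<forall>y\<in>dom T. app T (x + y) = app T x + app T y) \<and>
     (\<forall>c. \<forall>x\<in>dom T. app T (scaleC c x) = scaleC c (app T x))"

definition densely_defined :: "'a::complex_inner linop \<Rightarrow> bool" where
  "densely_defined T \<longleftrightarrow> closure (dom T) = UNIV"

definition op_eq :: "'a linop \<Rightarrow> 'a linop \<Rightarrow> bool" where
  "op_eq S T \<longleftrightarrow> dom S = dom T \<and> (\<forall>x\<in>dom S. app S x = app T x)"

definition adjoint :: "'a::complex_inner linop \<Rightarrow> 'a linop" where
  "adjoint T = ({y. \<exists>z. \<forall>x\<in>dom T. cinner (app T x) y = cinner x z},
                (\<lambda>y. THE z. \<forall>x\<in>dom T. cinner (app T x) y = cinner x z))"

definition self_adjoint :: "'a::complex_inner linop \<Rightarrow> bool" where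
  "self_adjoint T \<longleftrightarrow> is_linop T \<and> densely_defined T \<and> op_eq T (adjoint T)"

definition op_comp :: "'a linop \<Rightarrow> 'a linop \<Rightarrow> 'a linop" where
  "op_comp S T = ({x \<in> dom T. app T x \<in> dom S}, (\<lambda>x. app S (app T x)))"

definition full_op :: "('a \<Rightarrow> 'a) \<Rightarrow> 'a linop" where
  "full_op f = (UNIV, f)"

definition bounded_clinear :: "('a::complex_inner \<Rightarrow> 'a) \<Rightarrow> bool" where
  "bounded_clinear f \<longleftrightarrow> (\<forall>x y. f (x + y) = f x + f y) \<and> (\<forall>c x. f (scaleC c x) = scaleC c (f x))
     \<and> (\<exists>K. \<forall>x. norm (f x) \<le> norm x * K)"

definition symmetric_op :: "('a::complex_inner \<Rightarrow> 'a) \<Rightarrow> bool" where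
  "symmetric_op f \<longleftrightarrow> (\<forall>x y. cinner (f x) y = cinner x (f y))"

definition kernel :: "('a::zero \<Rightarrow> 'a) \<Rightarrow> 'a set" where
  "kernel f = {x. f x = 0}"

end

theory Submission
  imports Defs
begin

text \<open>Since \<open>A\<close> is symmetric with closed range, the space splits orthogonally as
  \<open>R(A) \<oplus> N(A)\<close>, and \<open>A\<close> maps \<open>R(A)\<close> onto itself. The inclusion \<open>AP \<subseteq> (PA)\<^sup>*\<close> is a
  formal computation. Conversely, let \<open>(PA)\<^sup>* y = z\<close>. Testing against \<open>N(A)\<close> shows \<open>z \<bottom> N(A)\<close>,
  so \<open>z = A w\<close> with \<open>w \<in> R(A)\<close>. Splitting \<open>u \<in> D(P)\<close> as \<open>Ax + u\<^sub>0\<close> and \<open>y\<close> as \<open>Aa + y\<^sub>0\<close>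
  along \<open>R(A) \<oplus> N(A)\<close> and using \<open>P N(A) \<subseteq> N(A)\<close>, one finds \<open>\<langle>Pu, y\<rangle> = \<langle>u, w + P y\<^sub>0\<rangle>\<close>
  for all \<open>u \<in> D(P)\<close>, hence \<open>y \<in> D(P\<^sup>*) = D(P)\<close>. For \<open>APA\<close>, symmetry is formal, and
  \<open>y \<in> D((APA)\<^sup>*)\<close> gives \<open>Ay \<in> D((PA)\<^sup>*) \<subseteq> D(P)\<close>, i.e. \<open>y \<in> D(APA)\<close>.\<close>

lemma cinner_add_right: "cinner x (y + z) = cinner x y + cinner x (z::'a::complex_inner)"
  using cinner_commute[of x "y+z"] cinner_commute[of y x] cinner_commute[of z x]
  by (simp add: cinner_add_left)

lemma cinner_scaleC_right: "cinner x (scaleC a y) = a * cinner x (y::'a::complex_inner)"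
  using cinner_commute[of x "scaleC a y"] cinner_commute[of y x]
  by (simp add: cinner_scaleC_left)

lemma cinner_zero_left [simp]: "cinner 0 (y::'a::complex_inner) = 0"
  using cinner_add_left[of 0 0 y] by simp

lemma cinner_zero_right [simp]: "cinner y (0::'a::complex_inner) = 0"
  using cinner_add_right[of y 0 0] by simp

lemma scaleC_minus_one: "scaleC (-1) (x::'a::complex_inner) = - x"
  using scaleC_of_real[of "-1" x] by simp

lemma cinner_minus_left: "cinner (- x) (y::'a::complex_inner) = - cinner x y"
  using cinner_add_left[of x "-x" y] by (simp add: eq_neg_iff_add_eq_0 add.commute)

lemma cinner_minus_right: "cinner y (- x::'a::complex_inner) = - cinner y x"
  using cinner_add_right[of y x "-x"] by (simp add: eq_neg_iff_add_eq_0 add.commute)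

lemma cinner_diff_left: "cinner (x - z) (y::'a::complex_inner) = cinner x y - cinner z y"
  using cinner_add_left[of x "-z" y] by (simp add: cinner_minus_left)

lemma cinner_diff_right: "cinner y (x - z::'a::complex_inner) = cinner y x - cinner y z"
  using cinner_add_right[of y x "-z"] by (simp add: cinner_minus_right)

lemma cinner_scaleR_right: "cinner y (scaleR r x::'a::complex_inner) = complex_of_real r * cinner y x"
  using cinner_scaleC_right[of y "complex_of_real r" x] scaleC_of_real[of r x] by simp

lemma Re_cinner_commute: "Re (cinner x (y::'a::complex_inner)) = Re (cinner y x)"
  using cinner_commute[of x y] by simp

lemma power2_norm_eq_cinner: "(norm (x::'a::complex_inner))\<^sup>2 = Re (cinner x x)"
  using norm_eq_sqrt_cinner[of x] cinner_ge_zero[of x] by simp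

lemma power2_norm_add:
  "(norm (x + y::'a::complex_inner))\<^sup>2 = (norm x)\<^sup>2 + 2 * Re (cinner x y) + (norm y)\<^sup>2"
  unfolding power2_norm_eq_cinner using Re_cinner_commute[of y x]
  by (simp add: cinner_add_left cinner_add_right)

lemma power2_norm_diff:
  "(norm (x - y::'a::complex_inner))\<^sup>2 = (norm x)\<^sup>2 - 2 * Re (cinner x y) + (norm y)\<^sup>2"
  unfolding power2_norm_eq_cinner using Re_cinner_commute[of y x]
  by (simp add: cinner_diff_left cinner_diff_right)

lemma Re_cinner_polarization:
  "Re (cinner x (y::'a::complex_inner)) = ((norm (x + y))\<^sup>2 - (norm (x - y))\<^sup>2) / 4"
  by (simp add: power2_norm_add power2_norm_diff)

lemma cinner_self_eq_zero_iff [simp]: "cinner x x = 0 \<longleftrightarrow> (x::'a::complex_inner) = 0"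
  by (rule cinner_eq_zero)

lemma orthogonal_dense_eq_zero:
  fixes w :: "'a::complex_inner"
  assumes "closure D = UNIV" and "\<forall>x\<in>D. cinner x w = 0"
  shows "w = 0"
proof -
  let ?S = "{x::'a. ((norm (x + w))\<^sup>2 - (norm (x - w))\<^sup>2) / 4 = 0}"
  have "closed ?S"
    by (intro closed_Collect_eq continuous_intros) auto
  moreover have "D \<subseteq> ?S"
    using assms(2) by (auto simp flip: Re_cinner_polarization)
  ultimately have "w \<in> ?S"
    using assms(1) closure_minimal by blast
  then have "Re (cinner w w) = 0"
    by (simp add: Re_cinner_polarization)
  then have "cinner w w = 0"
    using cinner_ge_zero[of w] by (simp add: complex_eq_iff)
  then show ?thesis
    by simp
qed

lemma parallelogram_law:
  "(norm (x + y::'a::complex_inner))\<^sup>2 + (norm (x - y))\<^sup>2 = 2 * (norm x)\<^sup>2 + 2 * (norm y)\<^sup>2"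
  by (simp add: power2_norm_add power2_norm_diff)

lemma power2_norm_diff_midpoint:
  fixes v a b :: "'a::complex_inner"
  shows "(norm (a - b))\<^sup>2
    = 2 * (norm (v - a))\<^sup>2 + 2 * (norm (v - b))\<^sup>2 - 4 * (norm (v - scaleR (1/2) (a + b)))\<^sup>2"
proof -
  have "(v - a) + (v - b) = scaleR 2 (v - scaleR (1/2) (a + b))"
    by (simp add: algebra_simps scaleR_2)
  then have "(norm ((v - a) + (v - b)))\<^sup>2 = 4 * (norm (v - scaleR (1/2) (a + b)))\<^sup>2"
    by (simp add: power_mult_distrib)
  moreover have "norm ((v - a) - (v - b)) = norm (a - b)"
    by (simp add: norm_minus_commute)
  ultimately show ?thesis
    using parallelogram_law[of "v - a" "v - b"] by simp
qed

lemma Cauchy_of_power2_norm_diff_bound: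
  fixes f :: "nat \<Rightarrow> 'a::real_normed_vector"
  assumes bound: "\<And>n k. (norm (f n - f k))\<^sup>2 \<le> 2 * inverse (real (Suc n)) + 2 * inverse (real (Suc k))"
  shows "Cauchy f"
proof (rule metric_CauchyI)
  fix e :: real
  assume e: "0 < e"
  obtain N :: nat where "4 / e\<^sup>2 < real N"
    using reals_Archimedean2 by blast
  then have "4 / e\<^sup>2 < real (Suc N)"
    by simp
  then have N: "4 * inverse (real (Suc N)) < e\<^sup>2"
    using e by (simp add: field_simps)
  have "dist (f m) (f n) < e" if "N \<le> m" "N \<le> n" for m n
  proof -
    have "inverse (real (Suc m)) \<le> inverse (real (Suc N))" "inverse (real (Suc n)) \<le> inverse (real (Suc N))"
      using that by (simp_all add: le_imp_inverse_le)
    then have "(norm (f m - f n))\<^sup>2 < e\<^sup>2"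
      using bound[of m n] N by linarith
    then show ?thesis
      using e by (simp add: dist_norm power2_less_imp_less less_imp_le)
  qed
  then show "\<exists>M. \<forall>m\<ge>M. \<forall>n\<ge>M. dist (f m) (f n) < e"
    by blast
qed

lemma closest_point_exists:
  fixes M :: "'a::chilbert_space set"
  assumes "closed M" and "convex M" and "M \<noteq> {}"
  obtains m where "m \<in> M" and "\<And>m'. m' \<in> M \<Longrightarrow> norm (v - m) \<le> norm (v - m')"
proof -
  define d where "d = (INF m\<in>M. (norm (v - m))\<^sup>2)"
  have bdd: "bdd_below ((\<lambda>m. (norm (v - m))\<^sup>2) ` M)"
    by (intro bdd_belowI2[of _ 0]) simp
  have d_le: "d \<le> (norm (v - m))\<^sup>2" if "m \<in> M" for m
    unfolding d_def using bdd that by (rule cINF_lower)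
  have "\<exists>m\<in>M. (norm (v - m))\<^sup>2 < d + inverse (real (Suc n))" for n
    using cInf_lessD[of "(\<lambda>m. (norm (v - m))\<^sup>2) ` M" "d + inverse (real (Suc n))"] assms(3)
    unfolding d_def by auto
  then obtain f where f_in: "\<And>n. f n \<in> M"
    and f_close: "\<And>n. (norm (v - f n))\<^sup>2 < d + inverse (real (Suc n))"
    by metis
  have "(norm (f n - f k))\<^sup>2 \<le> 2 * inverse (real (Suc n)) + 2 * inverse (real (Suc k))" for n k
  proof -
    have "scaleR (1/2) (f n + f k) \<in> M"
      using convexD[OF assms(2) f_in[of n] f_in[of k], of "1/2" "1/2"] by (simp add: scaleR_right_distrib)
    then have "d \<le> (norm (v - scaleR (1/2) (f n + f k)))\<^sup>2"
      by (rule d_le)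
    then show ?thesis
      using power2_norm_diff_midpoint[of "f n" "f k" v] f_close[of n] f_close[of k] by linarith
  qed
  then have "Cauchy f"
    by (rule Cauchy_of_power2_norm_diff_bound)
  then obtain m where f_lim: "f \<longlonglongrightarrow> m"
    using Cauchy_convergent convergent_def by blast
  have "m \<in> M"
    using closed_sequentially[OF assms(1)] f_in f_lim by blast
  moreover have "(norm (v - m))\<^sup>2 \<le> d + 0"
  proof (rule LIMSEQ_le)
    show "(\<lambda>n. (norm (v - f n))\<^sup>2) \<longlonglongrightarrow> (norm (v - m))\<^sup>2"
      by (intro tendsto_intros f_lim)
    show "(\<lambda>n. d + inverse (real (Suc n))) \<longlonglongrightarrow> d + 0"
      by (intro tendsto_intros LIMSEQ_inverse_real_of_nat)
  qed (use f_close less_imp_le in blast)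
  then have "norm (v - m) \<le> norm (v - m')" if "m' \<in> M" for m'
    using d_le[OF that] by (simp add: power2_le_imp_le)
  ultimately show ?thesis
    using that by blast
qed

lemma closest_point_subspace_orthogonal:
  fixes M :: "'a::complex_inner set"
  assumes "subspace M" and "m \<in> M" and closest: "\<And>m'. m' \<in> M \<Longrightarrow> norm (v - m) \<le> norm (v - m')"
    and "w \<in> M"
  shows "Re (cinner w (v - m)) = 0"
proof (rule ccontr)
  define a where "a = Re (cinner w (v - m))"
  define b where "b = (norm w)\<^sup>2"
  define t where "t = a / (b + 1)"
  \<comment> \<open>a step size for which \<open>m + t w\<close> would be strictly closer to \<open>v\<close> than \<open>m\<close>\<close>
  assume "Re (cinner w (v - m)) \<noteq> 0"
  then have "a \<noteq> 0"
    by (simp add: a_def)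
  have b: "0 \<le> b"
    by (simp add: b_def)
  have "m + scaleR t w \<in> M"
    using assms by (simp add: subspace_add subspace_scale)
  then have "(norm (v - m))\<^sup>2 \<le> (norm ((v - m) - scaleR t w))\<^sup>2"
    using closest by (simp add: diff_diff_eq power_mono)
  also have "\<dots> = (norm (v - m))\<^sup>2 - 2 * (t * a) + t\<^sup>2 * b"
    unfolding power2_norm_diff a_def b_def
    by (simp add: cinner_scaleR_right Re_cinner_commute[of "v - m"] power_mult_distrib)
  finally have "0 \<le> (b + 1)\<^sup>2 * (t\<^sup>2 * b - 2 * (t * a))"
    by simp
  also have "\<dots> = (t * (b + 1))\<^sup>2 * b - 2 * a * (t * (b + 1)) * (b + 1)"
    by (simp add: algebra_simps power2_eq_square)
  also have "t * (b + 1) = a"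
    using b by (simp add: t_def)
  also have "a\<^sup>2 * b - 2 * a * a * (b + 1) = - (a\<^sup>2 * (b + 2))"
    by (simp add: algebra_simps power2_eq_square)
  finally have "a\<^sup>2 * (b + 2) \<le> 0"
    by simp
  moreover have "0 < a\<^sup>2 * (b + 2)"
    using \<open>a \<noteq> 0\<close> b by simp
  ultimately show False
    by linarith
qed

lemma bounded_clinear_add: "bounded_clinear A \<Longrightarrow> A (x + y) = A x + A y"
  by (simp add: bounded_clinear_def)

lemma bounded_clinear_scaleC: "bounded_clinear A \<Longrightarrow> A (scaleC c x) = scaleC c (A x)"
  by (simp add: bounded_clinear_def)

lemma bounded_clinear_linear: "bounded_clinear A \<Longrightarrow> linear A"
  by (rule linearI) (simp_all add: bounded_clinear_add bounded_clinear_scaleC flip: scaleC_of_real)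

lemma symmetric_op_kernel_orthogonal_range:
  "symmetric_op A \<Longrightarrow> A n = 0 \<Longrightarrow> cinner n (A w) = 0"
  by (metis cinner_zero_left symmetric_op_def)

lemma symmetric_op_range_orthogonal_kernel:
  "symmetric_op A \<Longrightarrow> A n = 0 \<Longrightarrow> cinner (A w) n = 0"
  by (metis cinner_zero_right symmetric_op_def)

lemma range_kernel_decomposition:
  fixes A :: "'a::chilbert_space \<Rightarrow> 'a"
  assumes A: "bounded_clinear A" and A_sym: "symmetric_op A" and closed: "closed (range A)"
  obtains x n where "v = A x + n" and "A n = 0"
proof -
  have subspace: "subspace (range A)"
    using bounded_clinear_linear[OF A] subspace_UNIV by (rule linear_subspace_image)
  obtain m where "m \<in> range A" and closest: "\<And>m'. m' \<in> range A \<Longrightarrow> norm (v - m) \<le> norm (v - m')"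
    using closest_point_exists[OF closed subspace_imp_convex[OF subspace], of v] by auto
  then obtain x where m: "m = A x"
    by blast
  have Re_orth: "Re (cinner (A y) (v - A x)) = 0" for y
    using closest_point_subspace_orthogonal[OF subspace \<open>m \<in> range A\<close> closest, of "A y"] m by simp
  have orth: "cinner (A y) (v - A x) = 0" for y
  proof -
    have "Im (cinner (A y) (v - A x)) = 0"
      using Re_orth[of "scaleC \<i> y"] by (simp add: bounded_clinear_scaleC[OF A] cinner_scaleC_left)
    then show ?thesis
      using Re_orth[of y] by (simp add: complex_eq_iff)
  qed
  have "cinner (A (v - A x)) (A (v - A x)) = cinner (A (A (v - A x))) (v - A x)"
    using A_sym by (simp add: symmetric_op_def)
  then have "A (v - A x) = 0"
    using orth[of "A (v - A x)"] by simp
  then show ?thesis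
    using that[of x "v - A x"] by simp
qed

text \<open>With the decomposition, this says that \<open>A\<close> maps \<open>R(A)\<close> onto \<open>R(A) = N(A)\<^sup>\<bottom>\<close>.\<close>

lemma orthogonal_kernel_imp_range_range:
  fixes A :: "'a::chilbert_space \<Rightarrow> 'a"
  assumes A: "bounded_clinear A" and A_sym: "symmetric_op A" and closed: "closed (range A)"
    and orth: "\<And>n. A n = 0 \<Longrightarrow> cinner n z = 0"
  obtains c where "z = A (A c)"
proof -
  obtain b b\<^sub>0 where z: "z = A b + b\<^sub>0" and b\<^sub>0: "A b\<^sub>0 = 0"
    by (rule range_kernel_decomposition[OF A A_sym closed])
  have "cinner b\<^sub>0 b\<^sub>0 = cinner b\<^sub>0 z"
    using symmetric_op_kernel_orthogonal_range[OF A_sym b\<^sub>0] by (simp add: z cinner_add_right)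
  then have "z = A b"
    using orth[OF b\<^sub>0] z by simp
  obtain c c\<^sub>0 where "b = A c + c\<^sub>0" and "A c\<^sub>0 = 0"
    by (rule range_kernel_decomposition[OF A A_sym closed])
  then have "z = A (A c)"
    using \<open>z = A b\<close> by (simp add: bounded_clinear_add[OF A])
  then show ?thesis
    by (rule that)
qed

lemma dom_op_comp [simp]: "dom (op_comp S T) = {x \<in> dom T. app T x \<in> dom S}"
  by (simp add: op_comp_def dom_def)

lemma app_op_comp [simp]: "app (op_comp S T) x = app S (app T x)"
  by (simp add: op_comp_def app_def)

lemma dom_full_op [simp]: "dom (full_op f) = UNIV"
  by (simp add: full_op_def dom_def)

lemma app_full_op [simp]: "app (full_op f) = f"
  by (simp add: full_op_def app_def)

lemma dom_adjoint: "dom (adjoint T) = {y. \<exists>z. \<forall>x\<in>dom T. cinner (app T x) y = cinner x z}"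
  by (simp add: adjoint_def dom_def)

lemma adjointI:
  fixes T :: "'a::complex_inner linop"
  assumes dense: "densely_defined T" and adj: "\<forall>x\<in>dom T. cinner (app T x) y = cinner x z"
  shows "y \<in> dom (adjoint T)" and "app (adjoint T) y = z"
proof -
  show "y \<in> dom (adjoint T)"
    using adj by (auto simp: dom_adjoint)
  have "(THE z. \<forall>x\<in>dom T. cinner (app T x) y = cinner x z) = z"
  proof (rule the_equality)
    fix z'
    assume "\<forall>x\<in>dom T. cinner (app T x) y = cinner x z'"
    then have "\<forall>x\<in>dom T. cinner x (z' - z) = 0"
      using adj by (simp add: cinner_diff_right)
    then show "z' = z"
      using dense orthogonal_dense_eq_zero unfolding densely_defined_def by fastforce
  qed (rule adj)
  then show "app (adjoint T) y = z"
    by (simp add: adjoint_def app_def)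
qed

lemma csubspace_diff: "csubspace D \<Longrightarrow> x \<in> D \<Longrightarrow> y \<in> D \<Longrightarrow> x - y \<in> D"
  unfolding csubspace_def by (metis diff_conv_add_uminus scaleC_minus_one)

lemma is_linop_add: "is_linop T \<Longrightarrow> x \<in> dom T \<Longrightarrow> y \<in> dom T \<Longrightarrow> app T (x + y) = app T x + app T y"
  by (simp add: is_linop_def)

lemma is_linop_zero: "is_linop T \<Longrightarrow> 0 \<in> dom T \<and> app T 0 = 0"
  by (metis add_cancel_right_right add_0 csubspace_def is_linop_add is_linop_def)

lemma self_adjoint_domI:
  assumes "self_adjoint P" and "\<And>u. u \<in> dom P \<Longrightarrow> cinner (app P u) y = cinner u z"
  shows "y \<in> dom P" and "app P y = z"
  using adjointI[of P y z] assms unfolding self_adjoint_def op_eq_def by auto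

lemma self_adjoint_cinner_commute:
  assumes P: "self_adjoint P" and "x \<in> dom P" and "y \<in> dom P"
  shows "cinner (app P x) y = cinner x (app P y)"
proof -
  have "y \<in> dom (adjoint P)"
    using P \<open>y \<in> dom P\<close> by (simp add: self_adjoint_def op_eq_def)
  then obtain z where z: "\<And>u. u \<in> dom P \<Longrightarrow> cinner (app P u) y = cinner u z"
    by (auto simp: dom_adjoint)
  then have "app P y = z"
    by (rule self_adjoint_domI[OF P])
  then show ?thesis
    using z \<open>x \<in> dom P\<close> by simp
qed

lemma adjoint_comp_extends_comp:
  assumes A_sym: "symmetric_op A" and P: "self_adjoint P"
    and dense: "densely_defined (op_comp P (full_op A))" and "y \<in> dom P"
  shows "y \<in> dom (adjoint (op_comp P (full_op A)))"
    and "app (adjoint (op_comp P (full_op A))) y = A (app P y)"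
proof -
  have adj: "\<forall>x\<in>dom (op_comp P (full_op A)). cinner (app (op_comp P (full_op A)) x) y = cinner x (A (app P y))"
  proof
    fix x
    assume "x \<in> dom (op_comp P (full_op A))"
    then have "cinner (app P (A x)) y = cinner (A x) (app P y)"
      using self_adjoint_cinner_commute[OF P _ \<open>y \<in> dom P\<close>] by simp
    then show "cinner (app (op_comp P (full_op A)) x) y = cinner x (A (app P y))"
      using A_sym by (simp add: symmetric_op_def)
  qed
  show "y \<in> dom (adjoint (op_comp P (full_op A)))"
    using adj by (rule adjointI(1)[OF dense])
  show "app (adjoint (op_comp P (full_op A))) y = A (app P y)"
    using adj by (rule adjointI(2)[OF dense])
qed

lemma adjoint_comp_range_range:
  fixes A :: "'a::chilbert_space \<Rightarrow> 'a"
  assumes A: "bounded_clinear A" and A_sym: "symmetric_op A" and closed: "closed (range A)"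
    and P: "is_linop P" and y: "y \<in> dom (adjoint (op_comp P (full_op A)))"
  obtains c where "\<And>x. A x \<in> dom P \<Longrightarrow> cinner (app P (A x)) y = cinner (A x) (A c)"
proof -
  obtain z where z: "\<And>x. A x \<in> dom P \<Longrightarrow> cinner (app P (A x)) y = cinner x z"
    using y by (auto simp: dom_adjoint)
  have "cinner n z = 0" if "A n = 0" for n
    using z[of n] that is_linop_zero[OF P] by simp
  then obtain c where "z = A (A c)"
    by (rule orthogonal_kernel_imp_range_range[OF A A_sym closed])
  then show ?thesis
    using that z A_sym by (simp add: symmetric_op_def)
qed

lemma dom_adjoint_comp_subset:
  fixes A :: "'a::chilbert_space \<Rightarrow> 'a"
  assumes A: "bounded_clinear A" and A_sym: "symmetric_op A" and closed: "closed (range A)"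
    and P: "self_adjoint P" and ker_dom: "kernel A \<subseteq> dom P" and ker_inv: "app P ` kernel A \<subseteq> kernel A"
  shows "dom (adjoint (op_comp P (full_op A))) \<subseteq> dom P"
proof
  have P_lin: "is_linop P"
    using P by (simp add: self_adjoint_def)
  have ker: "n \<in> dom P" "A (app P n) = 0" if "A n = 0" for n
    using that ker_dom ker_inv by (auto simp: kernel_def)
  fix y
  assume "y \<in> dom (adjoint (op_comp P (full_op A)))"
  then obtain c where adj: "\<And>x. A x \<in> dom P \<Longrightarrow> cinner (app P (A x)) y = cinner (A x) (A c)"
    using adjoint_comp_range_range[OF A A_sym closed P_lin] by blast
  obtain a y\<^sub>0 where y: "y = A a + y\<^sub>0" and y\<^sub>0: "A y\<^sub>0 = 0"
    by (rule range_kernel_decomposition[OF A A_sym closed])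
  have "cinner (app P u) y = cinner u (A c + app P y\<^sub>0)" if "u \<in> dom P" for u
  proof -
    obtain x u\<^sub>0 where u: "u = A x + u\<^sub>0" and u\<^sub>0: "A u\<^sub>0 = 0"
      by (rule range_kernel_decomposition[OF A A_sym closed])
    have "A x \<in> dom P"
      using csubspace_diff[of "dom P" u u\<^sub>0] P_lin \<open>u \<in> dom P\<close> ker[OF u\<^sub>0] u
      by (simp add: is_linop_def)
    have "cinner (app P (A x)) y = cinner u (A c)"
      using adj[OF \<open>A x \<in> dom P\<close>] symmetric_op_kernel_orthogonal_range[OF A_sym u\<^sub>0]
      by (simp add: u cinner_add_left)
    moreover have "cinner (app P u\<^sub>0) y = cinner u (app P y\<^sub>0)"
    proof -
      have "cinner (app P u\<^sub>0) y = cinner (app P u\<^sub>0) y\<^sub>0"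
        using symmetric_op_kernel_orthogonal_range[OF A_sym ker(2)[OF u\<^sub>0]] by (simp add: y cinner_add_right)
      also have "\<dots> = cinner u\<^sub>0 (app P y\<^sub>0)"
        using self_adjoint_cinner_commute[OF P ker(1)[OF u\<^sub>0] ker(1)[OF y\<^sub>0]] .
      also have "\<dots> = cinner u (app P y\<^sub>0)"
        using symmetric_op_range_orthogonal_kernel[OF A_sym ker(2)[OF y\<^sub>0]] by (simp add: u cinner_add_left)
      finally show ?thesis .
    qed
    ultimately show ?thesis
      using is_linop_add[OF P_lin \<open>A x \<in> dom P\<close> ker(1)[OF u\<^sub>0]]
      by (simp add: u cinner_add_left cinner_add_right)
  qed
  then show "y \<in> dom P"
    by (rule self_adjoint_domI[OF P])
qed

lemma self_adjoint_sandwich: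
  assumes A: "bounded_clinear A" and A_sym: "symmetric_op A" and P: "self_adjoint P"
    and dense: "densely_defined (op_comp P (full_op A))"
    and dom_adj: "dom (adjoint (op_comp P (full_op A))) \<subseteq> dom P"
  shows "self_adjoint (op_comp (full_op A) (op_comp P (full_op A)))"
    (is "self_adjoint ?S")
proof -
  have P_lin: "is_linop P"
    using P by (simp add: self_adjoint_def)
  have S_lin: "is_linop ?S"
    using P_lin is_linop_zero[OF P_lin] bounded_clinear_linear[OF A]
    unfolding is_linop_def csubspace_def
    by (simp add: bounded_clinear_add[OF A] bounded_clinear_scaleC[OF A] linear_0)
  have S_dense: "densely_defined ?S"
    using dense by (simp add: densely_defined_def)
  have S_adj: "y \<in> dom (adjoint ?S) \<and> app (adjoint ?S) y = app ?S y" if "y \<in> dom ?S" for y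
  proof -
    have "cinner (app ?S x) y = cinner x (app ?S y)" if "x \<in> dom ?S" for x
      using self_adjoint_cinner_commute[OF P, of "A x" "A y"] \<open>y \<in> dom ?S\<close> that A_sym
      by (simp add: symmetric_op_def)
    then have "\<forall>x\<in>dom ?S. cinner (app ?S x) y = cinner x (app ?S y)"
      by blast
    then show ?thesis
      using adjointI[OF S_dense] by simp
  qed
  have adj_S: "y \<in> dom ?S" if "y \<in> dom (adjoint ?S)" for y
  proof -
    obtain z where "\<And>x. A x \<in> dom P \<Longrightarrow> cinner (A (app P (A x))) y = cinner x z"
      using \<open>y \<in> dom (adjoint ?S)\<close> by (auto simp: dom_adjoint)
    then have "\<forall>x\<in>dom (op_comp P (full_op A)). cinner (app (op_comp P (full_op A)) x) (A y) = cinner x z"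
      using A_sym by (simp add: symmetric_op_def)
    then show ?thesis
      using dom_adj by (auto simp: dom_adjoint)
  qed
  have "op_eq ?S (adjoint ?S)"
    unfolding op_eq_def
  proof (intro conjI ballI)
    show "dom ?S = dom (adjoint ?S)"
      using S_adj adj_S by blast
    show "app ?S x = app (adjoint ?S) x" if "x \<in> dom ?S" for x
      using S_adj[OF that] by (rule sym[OF conjunct2])
  qed
  then show ?thesis
    using S_lin S_dense by (simp add: self_adjoint_def)
qed

theorem theorem7:
  fixes A :: "'a::chilbert_space \<Rightarrow> 'a" and P :: "'a linop"
  assumes A_bounded: "bounded_clinear A"
    and A_sym: "symmetric_op A"
    and P_sa: "self_adjoint P"
    and PA_dense: "densely_defined (op_comp P (full_op A))"
    and R_closed: "closed (range A)"
    and N_sub: "kernel A \<subseteq> dom P"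
    and N_inv: "app P ` kernel A \<subseteq> kernel A"
  shows "op_eq (op_comp (full_op A) P) (adjoint (op_comp P (full_op A)))
         \<and> self_adjoint (op_comp (full_op A) (op_comp P (full_op A)))"
proof
  have dom_adj: "dom (adjoint (op_comp P (full_op A))) \<subseteq> dom P"
    using dom_adjoint_comp_subset[OF A_bounded A_sym R_closed P_sa N_sub N_inv] .
  show "op_eq (op_comp (full_op A) P) (adjoint (op_comp P (full_op A)))"
    using adjoint_comp_extends_comp[OF A_sym P_sa PA_dense] dom_adj
    unfolding op_eq_def by auto
  show "self_adjoint (op_comp (full_op A) (op_comp P (full_op A)))"
    using self_adjoint_sandwich[OF A_bounded A_sym P_sa PA_dense dom_adj] .
qed

end
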